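(* If $\lambda\in C_4\cup C_5\cup C_7$, then $t_{\mathrm{cut}}(\lambda)=t^1_{\mathrm{conj}}(\lambda)=t^1_{\mathrm{MAX}}(\lambda)=+\infty$.
   Context: Let $G=\mathbb R^5$ with coordinates $(x,y,z,v,w)$ (the Cartan group, identity $0$), vector fields $X_1=\partial_x-\frac y2\partial_z-\frac{x^2+y^2}{2}\partial_w$, $X_2=\partial_y+\frac x2\partial_z+\frac{x^2+y^2}{2}\partial_v$; sub-Riemannian problem $\dot g=u_1X_1+u_2X_2$, fixed endpoints, minimize $\int\sqrt{u_1^2+u_2^2}\,dt$. For $\lambda=(\theta,c,\alpha,\beta)$, $\theta,\beta\in S^1$, $c\in\mathbb R$, $\alpha\ge0$: $\mathrm{Exp}(\lambda,t)=g(t)$ with $g(0)=0$, $\dot g=\cos\theta(t)X_1+\sin\theta(t)X_2$, $\dot\theta=c$, $\dot c=-\alpha\sin(\theta-\beta)$, $(\theta(0),c(0))=(\theta,c)$. $E=\frac{c^2}2-\alpha\cos(\theta-\beta)$; $C_4=\{\alpha>0,E=-\alpha\}$, $C_5=\{\alpha>0,E=\alpha,\theta-\beta=\pi\}$, $C_7=\{\alpha=c=0\}$. $t_{\mathrm{cut}}(\lambda)=\sup\{t>0:\mathrm{Exp}(\lambda,\cdot)|_{[0,t]}\text{ is length minimizing}\}$; $t^1_{\mathrm{conj}}(\lambda)=\sup\{t>0:\mathrm{Exp}(\lambda,\cdot)|_{[0,t]}\text{ is locally optimal}\}$ (minimizing among admissible curves with same endpoints in a $C([0,t],G)$-neighborhood).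 The first Maxwell time $t^1_{\mathrm{MAX}}$ is defined to be $+\infty$ on $C_3\cup C_4\cup C_5\cup C_7$ (where $C_3=\{\alpha>0,E=\alpha,\theta-\beta\neq\pi\}$). *)

theory Defs
  imports "HOL-Analysis.Analysis"
begin

text \<open>Points of the Cartan group G = R^5 with coordinates (x,y,z,v,w); identity is 0.\<close>
type_synonym cpt = "real \<times> real \<times> real \<times> real \<times> real"

definition X1 :: "cpt \<Rightarrow> cpt" where
  "X1 p = (case p of (x,y,z,v,w) \<Rightarrow> (1, 0, - y / 2, 0, - (x\<^sup>2 + y\<^sup>2) / 2))"

definition X2 :: "cpt \<Rightarrow> cpt" where
  "X2 p = (case p of (x,y,z,v,w) \<Rightarrow> (0, 1, x / 2, (x\<^sup>2 + y\<^sup>2) / 2, 0))"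

text \<open>Admissible curve on [0,T]: h is a Caratheodory (absolutely continuous) solution of
  dh/ds = v1 X1(h) + v2 X2(h) with bounded measurable (L-infinity) controls v1, v2.\<close>
definition sr_admissible :: "real \<Rightarrow> (real \<Rightarrow> cpt) \<Rightarrow> (real \<Rightarrow> real) \<Rightarrow> (real \<Rightarrow> real) \<Rightarrow> bool" where
  "sr_admissible T h v1 v2 \<longleftrightarrow>
     0 \<le> T \<and>
     v1 \<in> borel_measurable (lebesgue_on {0..T}) \<and>
     v2 \<in> borel_measurable (lebesgue_on {0..T}) \<and>
     bounded (v1 ` {0..T}) \<and> bounded (v2 ` {0..T}) \<and>
     (\<lambda>s. v1 s *\<^sub>R X1 (h s) + v2 s *\<^sub>R X2 (h s)) integrable_on {0..T} \<and>
     (\<forall>s\<in>{0..T}. h s = h 0 + integral {0..s} (\<lambda>r. v1 r *\<^sub>R X1 (h r) + v2 r *\<^sub>R X2 (h r)))"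

definition sr_length :: "real \<Rightarrow> (real \<Rightarrow> real) \<Rightarrow> (real \<Rightarrow> real) \<Rightarrow> real" where
  "sr_length T v1 v2 = integral {0..T} (\<lambda>s. sqrt ((v1 s)\<^sup>2 + (v2 s)\<^sup>2))"

definition sr_minimizing :: "real \<Rightarrow> (real \<Rightarrow> cpt) \<Rightarrow> (real \<Rightarrow> real) \<Rightarrow> (real \<Rightarrow> real) \<Rightarrow> bool" where
  "sr_minimizing t g u1 u2 \<longleftrightarrow>
     (\<forall>h v1 v2. sr_admissible t h v1 v2 \<and> h 0 = g 0 \<and> h t = g t \<longrightarrow>
        sr_length t u1 u2 \<le> sr_length t v1 v2)"

text \<open>Local optimality: minimizing among admissible curves with the same endpoints lying
  in a C([0,t],G)-neighbourhood (uniform distance) of g.\<close>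
definition sr_locally_optimal :: "real \<Rightarrow> (real \<Rightarrow> cpt) \<Rightarrow> (real \<Rightarrow> real) \<Rightarrow> (real \<Rightarrow> real) \<Rightarrow> bool" where
  "sr_locally_optimal t g u1 u2 \<longleftrightarrow>
     (\<exists>\<epsilon>>0. \<forall>h v1 v2. sr_admissible t h v1 v2 \<and> h 0 = g 0 \<and> h t = g t \<and>
        (\<forall>s\<in>{0..t}. dist (h s) (g s) < \<epsilon>) \<longrightarrow>
        sr_length t u1 u2 \<le> sr_length t v1 v2)"

definition t_cut :: "(real \<Rightarrow> cpt) \<Rightarrow> (real \<Rightarrow> real) \<Rightarrow> (real \<Rightarrow> real) \<Rightarrow> ereal" where
  "t_cut g u1 u2 = Sup {ereal t | t. t > 0 \<and> sr_minimizing t g u1 u2}"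

definition t_conj1 :: "(real \<Rightarrow> cpt) \<Rightarrow> (real \<Rightarrow> real) \<Rightarrow> (real \<Rightarrow> real) \<Rightarrow> ereal" where
  "t_conj1 g u1 u2 = Sup {ereal t | t. t > 0 \<and> sr_locally_optimal t g u1 u2}"

text \<open>Energy and the strata (theta, beta are real lifts of angles).\<close>
definition energy :: "real \<Rightarrow> real \<Rightarrow> real \<Rightarrow> real \<Rightarrow> real" where
  "energy \<theta> c \<alpha> \<beta> = c\<^sup>2 / 2 - \<alpha> * cos (\<theta> - \<beta>)"

definition in_C3 :: "real \<Rightarrow> real \<Rightarrow> real \<Rightarrow> real \<Rightarrow> bool" where
  "in_C3 \<theta> c \<alpha> \<beta> \<longleftrightarrow> \<alpha> > 0 \<and> energy \<theta> c \<alpha> \<beta> = \<alpha> \<and> \<not> (\<exists>k::int. \<theta> - \<beta> = pi + 2 * pi * k)"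

definition in_C4 :: "real \<Rightarrow> real \<Rightarrow> real \<Rightarrow> real \<Rightarrow> bool" where
  "in_C4 \<theta> c \<alpha> \<beta> \<longleftrightarrow> \<alpha> > 0 \<and> energy \<theta> c \<alpha> \<beta> = - \<alpha>"

definition in_C5 :: "real \<Rightarrow> real \<Rightarrow> real \<Rightarrow> real \<Rightarrow> bool" where
  "in_C5 \<theta> c \<alpha> \<beta> \<longleftrightarrow> \<alpha> > 0 \<and> energy \<theta> c \<alpha> \<beta> = \<alpha> \<and> (\<exists>k::int. \<theta> - \<beta> = pi + 2 * pi * k)"

definition in_C7 :: "real \<Rightarrow> real \<Rightarrow> real \<Rightarrow> real \<Rightarrow> bool" where
  "in_C7 \<theta> c \<alpha> \<beta> \<longleftrightarrow> \<alpha> = 0 \<and> c = 0"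

text \<open>First Maxwell time: the context only specifies it on C3, C4, C5, C7 (where it is +infinity);
  elsewhere it is left unspecified here.\<close>
definition t_MAX1 :: "real \<Rightarrow> real \<Rightarrow> real \<Rightarrow> real \<Rightarrow> ereal" where
  "t_MAX1 \<theta> c \<alpha> \<beta> =
     (if in_C3 \<theta> c \<alpha> \<beta> \<or> in_C4 \<theta> c \<alpha> \<beta> \<or> in_C5 \<theta> c \<alpha> \<beta> \<or> in_C7 \<theta> c \<alpha> \<beta>
      then \<infinity> else undefined)"

text \<open>The extremal trajectory Exp(lambda, .) : (th, c) solve the pendulum equation, and
  g solves dg/dt = cos th X1 + sin th X2 with g(0) = 0 (global solutions exist and are unique).\<close>
definition is_extremal :: "real \<Rightarrow> real \<Rightarrow> real \<Rightarrow> real \<Rightarrow>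
    (real \<Rightarrow> real) \<Rightarrow> (real \<Rightarrow> real) \<Rightarrow> (real \<Rightarrow> cpt) \<Rightarrow> bool" where
  "is_extremal \<theta>0 c0 \<alpha> \<beta> th cc g \<longleftrightarrow>
     th 0 = \<theta>0 \<and> cc 0 = c0 \<and> g 0 = 0 \<and>
     (\<forall>t. (th has_real_derivative cc t) (at t)) \<and>
     (\<forall>t. (cc has_real_derivative (- \<alpha> * sin (th t - \<beta>))) (at t)) \<and>
     (\<forall>t. (g has_vector_derivative (cos (th t) *\<^sub>R X1 (g t) + sin (th t) *\<^sub>R X2 (g t))) (at t))"

end

theory Submission
  imports Defs
begin

text \<open>On \<open>C\<^sub>4 \<union> C\<^sub>5 \<union> C\<^sub>7\<close> the initial point \<open>(\<theta>, c)\<close> is an equilibrium of the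
  pendulum \<open>\<theta>'' = -\<alpha> sin (\<theta> - \<beta>)\<close>, so by uniqueness (an energy estimate) \<open>\<theta>\<close> stays
  constant and the extremal projects to the unit-speed segment \<open>t (cos \<theta>, sin \<theta>)\<close> of the
  \<open>(x, y)\<close>-plane. The \<open>(x, y)\<close>-projection of an admissible curve with controls \<open>u\<^sub>1, u\<^sub>2\<close>
  has velocity \<open>(u\<^sub>1, u\<^sub>2)\<close>, so its length is at least the Euclidean distance between the
  projected endpoints; for the extremal on \<open>[0, t]\<close> that distance is \<open>t\<close>, its own length.
  Hence the extremal is minimizing on every \<open>[0, t]\<close>.\<close>

lemma second_order_zero_initial_vanishes:
  fixes y y' y'' :: "real \<Rightarrow> real" and a t :: real
  assumes "a \<ge> 0"
    and y: "\<And>s. (y has_real_derivative y' s) (at s)"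
    and y': "\<And>s. (y' has_real_derivative y'' s) (at s)"
    and bound: "\<And>s. \<bar>y'' s\<bar> \<le> a * \<bar>y s\<bar>"
    and "y 0 = 0" "y' 0 = 0" "t \<ge> 0"
  shows "y t = 0"
proof -
  define K where "K = 1 + a"
  define W where "W s = ((y s)\<^sup>2 + (y' s)\<^sup>2) * exp (- K * s)" for s
  have W': "(W has_real_derivative
      (2 * y s * y' s + 2 * y' s * y'' s - K * ((y s)\<^sup>2 + (y' s)\<^sup>2)) * exp (- K * s)) (at s)" for s
    unfolding W_def by (auto intro!: derivative_eq_intros y y' simp: algebra_simps)
  have "2 * y s * y' s + 2 * y' s * y'' s \<le> K * ((y s)\<^sup>2 + (y' s)\<^sup>2)" for s
  proof -
    have "y' s * y'' s \<le> \<bar>y' s\<bar> * \<bar>y'' s\<bar>"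
      by (metis abs_ge_self abs_mult)
    also have "\<dots> \<le> a * (\<bar>y' s\<bar> * \<bar>y s\<bar>)"
      using mult_left_mono[OF bound[of s], of "\<bar>y' s\<bar>"] by (simp add: ac_simps)
    also have "\<dots> \<le> a * (((y s)\<^sup>2 + (y' s)\<^sup>2) / 2)"
      using sum_squares_bound[of "\<bar>y' s\<bar>" "\<bar>y s\<bar>"] \<open>a \<ge> 0\<close>
      by (intro mult_left_mono) (simp_all add: ac_simps)
    finally show ?thesis
      using sum_squares_bound[of "y s" "y' s"] unfolding K_def by (simp add: algebra_simps)
  qed
  then have "W t \<le> W 0"
    using W' by (intro DERIV_nonpos_imp_nonincreasing[OF \<open>t \<ge> 0\<close>])
      (fastforce intro: mult_nonpos_nonneg)
  then have "(y t)\<^sup>2 + (y' t)\<^sup>2 \<le> 0"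
    using \<open>y 0 = 0\<close> \<open>y' 0 = 0\<close> by (simp add: W_def mult_le_0_iff)
  then show ?thesis
    by (simp add: sum_power2_le_zero_iff)
qed

lemma C4_C5_C7_equilibrium:
  assumes "in_C4 \<theta> c \<alpha> \<beta> \<or> in_C5 \<theta> c \<alpha> \<beta> \<or> in_C7 \<theta> c \<alpha> \<beta>"
  shows "c = 0 \<and> \<alpha> * sin (\<theta> - \<beta>) = 0"
  using assms
proof (elim disjE)
  assume "in_C4 \<theta> c \<alpha> \<beta>"
  then have "c\<^sup>2 / 2 = \<alpha> * (cos (\<theta> - \<beta>) - 1)" "\<alpha> > 0"
    by (auto simp: in_C4_def energy_def algebra_simps)
  moreover have "\<alpha> * (cos (\<theta> - \<beta>) - 1) \<le> 0"
    using \<open>\<alpha> > 0\<close> by (simp add: mult_nonneg_nonpos)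
  ultimately have "c\<^sup>2 \<le> 0"
    by linarith
  then have "c = 0"
    by simp
  with \<open>c\<^sup>2 / 2 = _\<close> \<open>\<alpha> > 0\<close> have "cos (\<theta> - \<beta>) = 1"
    by simp
  with \<open>c = 0\<close> show ?thesis
    using sin_cos_squared_add[of "\<theta> - \<beta>"] by simp
next
  assume "in_C5 \<theta> c \<alpha> \<beta>"
  then obtain k :: int where "\<theta> - \<beta> = pi + 2 * pi * k" "c\<^sup>2 / 2 - \<alpha> * cos (\<theta> - \<beta>) = \<alpha>"
    by (auto simp: in_C5_def energy_def)
  moreover have "sin (pi + 2 * pi * k) = 0" "cos (pi + 2 * pi * k) = -1"
    by (simp_all add: sin_add cos_add)
  ultimately show ?thesis
    by simp
qed (simp add: in_C7_def)

lemma pendulum_force_le_near_equilibrium: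
  fixes \<alpha> \<beta> \<theta> \<theta>0 :: real
  assumes "\<alpha> \<ge> 0" and "\<alpha> * sin (\<theta>0 - \<beta>) = 0"
  shows "\<bar>\<alpha> * sin (\<theta> - \<beta>)\<bar> \<le> \<alpha> * \<bar>\<theta> - \<theta>0\<bar>"
proof -
  have "\<alpha> * sin (\<theta> - \<beta>) = \<alpha> * sin (\<theta> - \<theta>0) * cos (\<theta>0 - \<beta>)"
    using sin_add[of "\<theta> - \<theta>0" "\<theta>0 - \<beta>"] assms(2) by (cases "\<alpha> = 0") (auto simp: algebra_simps)
  also have "\<bar>\<dots>\<bar> \<le> \<alpha> * \<bar>sin (\<theta> - \<theta>0)\<bar>"
    using assms(1) by (simp add: abs_mult mult_left_le)
  also have "\<dots> \<le> \<alpha> * \<bar>\<theta> - \<theta>0\<bar>"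
    using assms(1) abs_sin_x_le_abs_x by (intro mult_left_mono)
  finally show ?thesis .
qed

lemma extremal_angle_constant:
  assumes "is_extremal \<theta>0 c0 \<alpha> \<beta> th cc g"
    and "\<alpha> \<ge> 0" "c0 = 0" "\<alpha> * sin (\<theta>0 - \<beta>) = 0" "t \<ge> 0"
  shows "th t = \<theta>0"
proof -
  have "th t - \<theta>0 = 0"
  proof (rule second_order_zero_initial_vanishes[where y = "\<lambda>s. th s - \<theta>0" and y' = cc
        and y'' = "\<lambda>s. - \<alpha> * sin (th s - \<beta>)"])
    show "((\<lambda>s. th s - \<theta>0) has_real_derivative cc s) (at s)" for s
      using assms(1) by (auto simp: is_extremal_def intro!: derivative_eq_intros)
    show "(cc has_real_derivative - \<alpha> * sin (th s - \<beta>)) (at s)" for s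
      using assms(1) by (simp add: is_extremal_def)
    show "\<bar>- \<alpha> * sin (th s - \<beta>)\<bar> \<le> \<alpha> * \<bar>th s - \<theta>0\<bar>" for s
      using pendulum_force_le_near_equilibrium[OF assms(2,4)] by simp
  qed (use assms in \<open>simp_all add: is_extremal_def\<close>)
  then show ?thesis
    by simp
qed

definition hproj :: "cpt \<Rightarrow> real \<times> real" where
  "hproj p = (fst p, fst (snd p))"

lemma bounded_linear_hproj: "bounded_linear hproj"
  unfolding hproj_def
  by (intro bounded_linear_Pair bounded_linear_fst
      bounded_linear_compose[OF bounded_linear_fst bounded_linear_snd])

lemma hproj_control [simp]: "hproj (u1 *\<^sub>R X1 p + u2 *\<^sub>R X2 p) = (u1, u2)"
  by (simp add: hproj_def X1_def X2_def split: prod.splits)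

lemma extremal_hproj_segment:
  assumes "is_extremal \<theta>0 c0 \<alpha> \<beta> th cc g"
    and th: "\<And>s. s \<ge> 0 \<Longrightarrow> th s = \<theta>0" and "t \<ge> 0"
  shows "hproj (g t) = t *\<^sub>R (cos \<theta>0, sin \<theta>0)"
proof -
  define e where "e s = hproj (g s) - s *\<^sub>R (cos \<theta>0, sin \<theta>0)" for s
  have "(e has_vector_derivative 0) (at s within {0..})" if "s \<ge> 0" for s
  proof -
    have "(g has_vector_derivative (cos \<theta>0 *\<^sub>R X1 (g s) + sin \<theta>0 *\<^sub>R X2 (g s))) (at s)"
      using assms(1) unfolding is_extremal_def th[OF that, symmetric] by blast
    from bounded_linear.has_vector_derivative[OF bounded_linear_hproj this]
    have "((\<lambda>s. hproj (g s)) has_vector_derivative (cos \<theta>0, sin \<theta>0)) (at s)"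
      by simp
    then have "(e has_vector_derivative 0) (at s)"
      unfolding e_def
      by (rule has_vector_derivative_eq_rhs[OF has_vector_derivative_diff[OF _
            has_vector_derivative_scaleR[OF DERIV_ident has_vector_derivative_const]]])
        simp
    then show ?thesis
      by (rule has_vector_derivative_at_within)
  qed
  then obtain k where "\<And>s. s \<in> {0..} \<Longrightarrow> e s = k"
    using has_vector_derivative_zero_constant[of "{0..}" e] by blast
  moreover have "e 0 = 0"
    using assms(1) by (simp add: e_def is_extremal_def hproj_def zero_prod_def)
  ultimately have "e t = 0"
    using \<open>t \<ge> 0\<close> by (metis atLeast_iff order_refl)
  then show ?thesis
    by (simp add: e_def)
qed

lemma sr_length_ge_hproj_dist:
  assumes "sr_admissible t h v1 v2"
  shows "dist (hproj (h t)) (hproj (h 0)) \<le> sr_length t v1 v2"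
proof -
  define F where "F s = v1 s *\<^sub>R X1 (h s) + v2 s *\<^sub>R X2 (h s)" for s
  define Q where "Q s = (v1 s, v2 s)" for s
  have "t \<ge> 0" and intF: "F integrable_on {0..t}"
    and h_eq: "\<forall>s\<in>{0..t}. h s = h 0 + integral {0..s} F"
    and "bounded (v1 ` {0..t})" "bounded (v2 ` {0..t})"
    using assms unfolding sr_admissible_def F_def[abs_def] by blast+
  from h_eq have ht: "h t = h 0 + integral {0..t} F"
    using \<open>t \<ge> 0\<close> by (meson atLeastAtMost_iff order_refl)
  from \<open>bounded (v1 ` {0..t})\<close> \<open>bounded (v2 ` {0..t})\<close>
  obtain B1 B2 where B1: "\<And>s. s \<in> {0..t} \<Longrightarrow> \<bar>v1 s\<bar> \<le> B1"
    and B2: "\<And>s. s \<in> {0..t} \<Longrightarrow> \<bar>v2 s\<bar> \<le> B2"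
    unfolding bounded_iff by (metis image_eqI real_norm_def)
  have "hproj \<circ> F = Q"
    by (simp add: F_def Q_def fun_eq_iff)
  then have intQ: "Q integrable_on {0..t}"
    and iQ: "integral {0..t} Q = hproj (integral {0..t} F)"
    using integrable_linear[OF intF bounded_linear_hproj]
      integral_linear[OF intF bounded_linear_hproj]
    by simp_all
  have normQ: "norm (Q s) = sqrt ((v1 s)\<^sup>2 + (v2 s)\<^sup>2)" for s
    by (simp add: Q_def norm_Pair)
  have "Q absolutely_integrable_on {0..t}"
  proof (rule absolutely_integrable_integrable_bound[where g = "\<lambda>s. B1 + B2"])
    show "norm (Q s) \<le> B1 + B2" if "s \<in> {0..t}" for s
      using normQ[of s] sqrt_sum_squares_le_sum_abs[of "v1 s" "v2 s"] B1[OF that] B2[OF that]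
      by simp
  qed (simp_all add: intQ integrable_const_ivl)
  then have "norm (integral {0..t} Q) \<le> integral {0..t} (\<lambda>s. norm (Q s))"
    by (intro integral_norm_bound_integral intQ) (simp_all add: absolutely_integrable_on_def)
  moreover have "hproj (h t) - hproj (h 0) = integral {0..t} Q"
    using ht iQ linear_add[OF bounded_linear.linear[OF bounded_linear_hproj]] by simp
  ultimately show ?thesis
    by (simp add: dist_norm normQ sr_length_def)
qed

lemma Sup_ereal_pos_eq_infinity:
  assumes "\<And>t. t > 0 \<Longrightarrow> P t"
  shows "Sup {ereal t | t. t > 0 \<and> P t} = \<infinity>"
proof -
  have "{ereal t | t. t > 0 \<and> P t} = ereal ` {0<..}"
    using assms by auto
  also have "Sup \<dots> = \<infinity>"
  proof (rule SUP_PInfty)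
    show "\<exists>t\<in>{0<..}. ereal (real n) \<le> ereal t" for n
      by (intro bexI[of _ "real n + 1"]) auto
  qed
  finally show ?thesis .
qed

lemma sr_minimizing_imp_locally_optimal:
  "sr_minimizing t g u1 u2 \<Longrightarrow> sr_locally_optimal t g u1 u2"
  unfolding sr_minimizing_def sr_locally_optimal_def by (intro exI[of _ 1]) auto

lemma extremal_minimizing_if_angle_constant:
  assumes "is_extremal \<theta>0 c0 \<alpha> \<beta> th cc g"
    and th: "\<And>s. s \<ge> 0 \<Longrightarrow> th s = \<theta>0" and "t \<ge> 0"
  shows "sr_minimizing t g (\<lambda>s. cos (th s)) (\<lambda>s. sin (th s))"
  unfolding sr_minimizing_def
proof (intro allI impI)
  fix h v1 v2
  assume competitor: "sr_admissible t h v1 v2 \<and> h 0 = g 0 \<and> h t = g t"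
  have "sr_length t (\<lambda>s. cos (th s)) (\<lambda>s. sin (th s)) = t"
    using \<open>t \<ge> 0\<close> by (simp add: sr_length_def)
  also have "\<dots> = dist (hproj (g t)) (hproj (g 0))"
    using extremal_hproj_segment[OF assms(1) th] \<open>t \<ge> 0\<close>
    by (simp add: dist_norm norm_Pair power_mult_distrib flip: distrib_left)
  also have "\<dots> \<le> sr_length t v1 v2"
    using sr_length_ge_hproj_dist competitor by metis
  finally show "sr_length t (\<lambda>s. cos (th s)) (\<lambda>s. sin (th s)) \<le> sr_length t v1 v2" .
qed

theorem theorem6p1:
  fixes \<theta>0 c0 \<alpha> \<beta> :: real
    and th cc :: "real \<Rightarrow> real" and g :: "real \<Rightarrow> cpt"
  assumes "\<alpha> \<ge> 0"
    and "in_C4 \<theta>0 c0 \<alpha> \<beta> \<or> in_C5 \<theta>0 c0 \<alpha> \<beta> \<or> in_C7 \<theta>0 c0 \<alpha> \<beta>"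
    and "is_extremal \<theta>0 c0 \<alpha> \<beta> th cc g"
  shows "t_cut g (\<lambda>s. cos (th s)) (\<lambda>s. sin (th s)) = \<infinity>
    \<and> t_conj1 g (\<lambda>s. cos (th s)) (\<lambda>s. sin (th s)) = \<infinity>
    \<and> t_MAX1 \<theta>0 c0 \<alpha> \<beta> = \<infinity>"
proof -
  have "c0 = 0" "\<alpha> * sin (\<theta>0 - \<beta>) = 0"
    using C4_C5_C7_equilibrium[OF assms(2)] by simp_all
  then have "th s = \<theta>0" if "s \<ge> 0" for s
    using extremal_angle_constant[OF assms(3,1)] that by blast
  then have "sr_minimizing t g (\<lambda>s. cos (th s)) (\<lambda>s. sin (th s))" if "t > 0" for t
    using extremal_minimizing_if_angle_constant[OF assms(3)] that by simp
  then show ?thesis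
    unfolding t_cut_def t_conj1_def t_MAX1_def
    using assms(2) by (simp add: Sup_ereal_pos_eq_infinity sr_minimizing_imp_locally_optimal)
qed

end
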